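(* Suppose the coin process $\mathbf X$ satisfies \[ \lim_{m\to\infty}P_{X^m}(\mathcal S_m^c(\lambda))=0\quad\text{for every }\lambda>0, \] where $\mathcal S_m(\lambda)=\{x^m:\log\frac{1}{P_{X^m}(x^m)}\ge\lambda\}$. Then for every $n$ and every target distribution $P_{Y^n}$, the interval algorithm is valid, i.e. $\lim_{m\to\infty}\Pr(\phi_{\mathrm{int}}(X^m)=y^n)=P_{Y^n}(y^n)$ for every $y^n\in\mathcal Y^n$.
   Context: Logarithms are base 2. $\mathcal X=\{1,\dots,M\}$, $\mathcal Y=\{1,\dots,N\}$ are finite sets; the coin process $\mathbf X=\{X^m\}_{m\ge1}$ on $\mathcal X$ and target process $\mathbf Y=\{Y^n\}$ on $\mathcal Y$ are arbitrary processes given by consistent families of distributions. Interval algorithm: for $s\in\mathcal X^i$ define $\mathcal I_s=[\underline\alpha_s,\overline\alpha_s)$ by $\mathcal I_\bot=[0,1)$ and $\underline\alpha_{sx}=\underline\alpha_s+(\overline\alpha_s-\underline\alpha_s)\sum_{k<x}P_{X_{i+1}|X^i}(k|s)$, $\overline\alpha_{sx}=\underline\alpha_s+(\overline\alpha_s-\underline\alpha_s)\sum_{k\le x}P_{X_{i+1}|X^i}(k|s)$ (so $|\mathcal I_s|=P_{X^i}(s)$); define $\mathcal J_t$ for $t\in\mathcal Y^j$ likewise from $P_{Y_{j+1}|Y^j}$. The algorithm stops at the first $m$ with $\mathcal I_{X^m}\subseteq\mathcal J_{y^n}$ for some $y^n\in\mathcal Y^n$ and outputs that $y^n$; $\phi_{\mathrm{int}}(x^m)$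 is the output if it has stopped after reading $x^m$, and $\bot$ otherwise. *)

theory Defs
  imports "HOL-Analysis.Analysis"
begin

definition words :: "nat \<Rightarrow> nat \<Rightarrow> nat list set" where
  "words K m = {xs. length xs = m \<and> set xs \<subseteq> {1..K}}"

text \<open>A process on {1..K}, given by a consistent family of distributions:
  P m is the distribution of the first m symbols (a pmf on words K m).\<close>
definition is_process :: "nat \<Rightarrow> (nat \<Rightarrow> nat list \<Rightarrow> real) \<Rightarrow> bool" where
  "is_process K P \<longleftrightarrow>
     (\<forall>m xs. 0 \<le> P m xs) \<and>
     (\<forall>m xs. xs \<notin> words K m \<longrightarrow> P m xs = 0) \<and>
     (\<forall>m. (\<Sum>xs\<in>words K m. P m xs) = 1) \<and>
     (\<forall>m xs. P m xs = (\<Sum>x\<in>{1..K}. P (Suc m) (xs @ [x])))"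

text \<open>Conditional probability P_{X_{i+1}|X^i}(k|s), with i = length s
  (convention: 0 if P(s) = 0, where the interval I_s is empty anyway).\<close>
definition cond_prob :: "(nat \<Rightarrow> nat list \<Rightarrow> real) \<Rightarrow> nat \<Rightarrow> nat list \<Rightarrow> real" where
  "cond_prob P k s = P (Suc (length s)) (s @ [k]) / P (length s) s"

fun ivr :: "(nat \<Rightarrow> nat list \<Rightarrow> real) \<Rightarrow> nat list \<Rightarrow> real \<times> real" where
  "ivr P [] = (0, 1)"
| "ivr P (x # rs) =
     (let s = rev rs; a = fst (ivr P rs); b = snd (ivr P rs) in
       (a + (b - a) * (\<Sum>k\<in>{1..<x}. cond_prob P k s),
        a + (b - a) * (\<Sum>k\<in>{1..x}. cond_prob P k s)))"

definition endpoints :: "(nat \<Rightarrow> nat list \<Rightarrow> real) \<Rightarrow> nat list \<Rightarrow> real \<times> real" where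
  "endpoints P s = ivr P (rev s)"

definition interval :: "(nat \<Rightarrow> nat list \<Rightarrow> real) \<Rightarrow> nat list \<Rightarrow> real set" where
  "interval P s = {r. fst (endpoints P s) \<le> r \<and> r < snd (endpoints P s)}"

definition stops_at :: "(nat \<Rightarrow> nat list \<Rightarrow> real) \<Rightarrow> nat \<Rightarrow> (nat \<Rightarrow> nat list \<Rightarrow> real)
    \<Rightarrow> nat \<Rightarrow> nat list \<Rightarrow> bool" where
  "stops_at P N Q n s \<longleftrightarrow> (\<exists>y\<in>words N n. interval P s \<subseteq> interval Q y)"

text \<open>phi_int(x^m): Some output if stopped after reading x^m, None (bottom) otherwise.\<close>
definition phi_int :: "(nat \<Rightarrow> nat list \<Rightarrow> real) \<Rightarrow> nat \<Rightarrow> (nat \<Rightarrow> nat list \<Rightarrow> real)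
    \<Rightarrow> nat \<Rightarrow> nat list \<Rightarrow> nat list option" where
  "phi_int P N Q n xs =
     (if \<exists>k\<le>length xs. stops_at P N Q n (take k xs)
      then (let k0 = (LEAST k. stops_at P N Q n (take k xs)) in
            Some (SOME y. y \<in> words N n \<and> interval P (take k0 xs) \<subseteq> interval Q y))
      else None)"

definition prob_output :: "nat \<Rightarrow> (nat \<Rightarrow> nat list \<Rightarrow> real) \<Rightarrow> nat \<Rightarrow> (nat \<Rightarrow> nat list \<Rightarrow> real)
    \<Rightarrow> nat \<Rightarrow> nat \<Rightarrow> nat list \<Rightarrow> real" where
  "prob_output M P N Q n m y =
     (\<Sum>xs\<in>words M m. if phi_int P N Q n xs = Some y then P m xs else 0)"

text \<open>P_{X^m}(S_m^c(lambda)) where S_m(lambda) = {x^m. log(1/P(x^m)) \<ge> lambda}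
  (x^m with P(x^m) = 0 have log(1/P) = \<infinity> and so belong to S_m).\<close>
definition prob_Sc :: "nat \<Rightarrow> (nat \<Rightarrow> nat list \<Rightarrow> real) \<Rightarrow> nat \<Rightarrow> real \<Rightarrow> real" where
  "prob_Sc M P m lam =
     (\<Sum>xs\<in>{xs\<in>words M m. 0 < P m xs \<and> log 2 (1 / P m xs) < lam}. P m xs)"

end

theory Submission
  imports Defs
begin

text \<open>The intervals \<open>I x\<close> of the words \<open>x\<close> of length \<open>m\<close> are disjoint subintervals of
  \<open>[0,1)\<close> with \<open>|I x| = P\<^sub>X(x)\<close>. Up to words of probability zero, the algorithm outputs \<open>y\<close>
  exactly on the words with \<open>I x \<subseteq> J y\<close>, so the output probability is at most
  \<open>|J y| = P\<^sub>Y(y)\<close>. Conversely, a word whose interval neither lies in \<open>J y\<close> nor avoids it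
  contains an endpoint of \<open>J y\<close>; there are at most two such words, and unless they lie in
  \<open>S\<^sub>m\<^sup>c(\<lambda>)\<close> each has probability at most \<open>2 powr -\<lambda>\<close>. Hence the output probability is at least
  \<open>P\<^sub>Y(y) - P\<^sub>X(S\<^sub>m\<^sup>c(\<lambda>)) - 2 * 2 powr -\<lambda>\<close>; let \<open>m \<rightarrow> \<infinity>\<close> and then \<open>\<lambda> \<rightarrow> \<infinity>\<close>.\<close>

lemma sum_disjoint_Ico_le_measure:
  fixes l h :: "'a \<Rightarrow> real"
  assumes "finite S" and "\<And>i. i \<in> S \<Longrightarrow> l i \<le> h i"
    and "\<And>i j. i \<in> S \<Longrightarrow> j \<in> S \<Longrightarrow> i \<noteq> j \<Longrightarrow> {l i..<h i} \<inter> {l j..<h j} = {}"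
    and "\<And>i. i \<in> S \<Longrightarrow> {l i..<h i} \<subseteq> T" and "T \<in> fmeasurable lborel"
  shows "(\<Sum>i\<in>S. h i - l i) \<le> measure lborel T"
proof -
  have "(\<Sum>i\<in>S. h i - l i) = (\<Sum>i\<in>S. measure lborel {l i..<h i})"
    using assms(2) by (intro sum.cong) auto
  also have "\<dots> = measure lborel (\<Union>i\<in>S. {l i..<h i})"
    by (rule measure_finite_Union[symmetric])
       (use assms(1-3) in \<open>auto simp: disjoint_family_on_def emeasure_lborel_Ico\<close>)
  also have "\<dots> \<le> measure lborel T"
    by (rule measure_mono_fmeasurable) (use assms(1,4,5) in \<open>auto intro!: sets.finite_UN\<close>)
  finally show ?thesis .
qed

lemma Ico_fmeasurable: "{a..<b::real} \<in> fmeasurable lborel"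
  by (cases "a \<le> b") (auto simp: fmeasurable_def emeasure_lborel_Ico)

lemma finite_words: "finite (words K m)"
  using finite_lists_length_eq[of "{1..K}" m] by (simp add: words_def conj_commute)

lemma words_0: "words K 0 = {[]}"
  by (auto simp: words_def)

lemma length_words: "xs \<in> words K m \<Longrightarrow> length xs = m"
  by (simp add: words_def)

lemma prob_le_powr_if_log_ge:
  fixes p :: real
  assumes "0 < p" and "\<not> log 2 (1 / p) < lam"
  shows "p \<le> 2 powr - lam"
proof -
  have "2 powr lam \<le> 1 / p"
    using assms le_log_iff[of 2 "1 / p" lam] by simp
  then show ?thesis
    using assms(1) by (simp add: powr_minus_divide field_simps)
qed

definition lo :: "(nat \<Rightarrow> nat list \<Rightarrow> real) \<Rightarrow> nat list \<Rightarrow> real" where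
  "lo P s = fst (endpoints P s)"

definition hi :: "(nat \<Rightarrow> nat list \<Rightarrow> real) \<Rightarrow> nat list \<Rightarrow> real" where
  "hi P s = snd (endpoints P s)"

lemma interval_eq_Ico: "interval P s = {lo P s..<hi P s}"
  by (auto simp: interval_def lo_def hi_def)

lemma lo_Nil [simp]: "lo P [] = 0" and hi_Nil [simp]: "hi P [] = 1"
  by (auto simp: lo_def hi_def endpoints_def)

lemma lo_hi_snoc_cond_prob:
  "lo P (s @ [x]) = lo P s + (hi P s - lo P s) * (\<Sum>k\<in>{1..<x}. cond_prob P k s)"
  "hi P (s @ [x]) = lo P s + (hi P s - lo P s) * (\<Sum>k\<in>{1..x}. cond_prob P k s)"
  by (simp_all add: lo_def hi_def endpoints_def Let_def)

locale process =
  fixes K :: nat and P :: "nat \<Rightarrow> nat list \<Rightarrow> real"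
  assumes is_process: "is_process K P"
begin

lemma nonneg: "0 \<le> P m xs"
  using is_process unfolding is_process_def by blast

lemma eq_0_outside_words: "xs \<notin> words K m \<Longrightarrow> P m xs = 0"
  using is_process unfolding is_process_def by blast

lemma sum_words_eq_1: "(\<Sum>xs\<in>words K m. P m xs) = 1"
  using is_process unfolding is_process_def by blast

lemma consistent: "P m xs = (\<Sum>x\<in>{1..K}. P (Suc m) (xs @ [x]))"
  using is_process unfolding is_process_def by blast

lemma snoc_eq_0:
  assumes "P (length s) s = 0"
  shows "P (Suc (length s)) (s @ [k]) = 0"
proof (cases "k \<in> {1..K}")
  case True
  have "(\<Sum>x\<in>{1..K}. P (Suc (length s)) (s @ [x])) = 0"
    using assms consistent[of "length s" s] by linarith
  then have "\<forall>x\<in>{1..K}. P (Suc (length s)) (s @ [x]) = 0"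
    by (subst (asm) sum_nonneg_eq_0_iff) (auto simp: nonneg)
  with True show ?thesis by blast
next
  case False
  then show ?thesis by (intro eq_0_outside_words) (auto simp: words_def)
qed

lemma mult_cond_prob: "P (length s) s * cond_prob P k s = P (Suc (length s)) (s @ [k])"
  by (cases "P (length s) s = 0") (auto simp: cond_prob_def snoc_eq_0)

lemma interval_length: "hi P s - lo P s = P (length s) s"
proof (induction s rule: rev_induct)
  case Nil
  then show ?case using sum_words_eq_1[of 0] by (simp add: words_0)
next
  case (snoc x s)
  have "hi P (s @ [x]) - lo P (s @ [x]) =
      (\<Sum>k\<in>{1..x}. P (Suc (length s)) (s @ [k])) - (\<Sum>k\<in>{1..<x}. P (Suc (length s)) (s @ [k]))"
    by (simp add: lo_hi_snoc_cond_prob snoc sum_distrib_left mult_cond_prob)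
  also have "\<dots> = P (Suc (length s)) (s @ [x])"
  proof (cases "x = 0")
    case True
    then show ?thesis by (simp add: eq_0_outside_words words_def)
  next
    case False
    then have "{1..x} = insert x {1..<x}" by auto
    then show ?thesis by simp
  qed
  finally show ?case by simp
qed

lemma lo_snoc: "lo P (s @ [x]) = lo P s + (\<Sum>k\<in>{1..<x}. P (Suc (length s)) (s @ [k]))"
  and hi_snoc: "hi P (s @ [x]) = lo P s + (\<Sum>k\<in>{1..x}. P (Suc (length s)) (s @ [k]))"
  by (simp_all add: lo_hi_snoc_cond_prob interval_length sum_distrib_left mult_cond_prob)

lemma sum_children_le: "(\<Sum>k\<in>{1..x}. P (Suc (length s)) (s @ [k])) \<le> P (length s) s"
proof -
  have "(\<Sum>k\<in>{1..x}. P (Suc (length s)) (s @ [k])) =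
      (\<Sum>k\<in>{1..x} \<inter> {1..K}. P (Suc (length s)) (s @ [k]))"
    by (rule sum.mono_neutral_right) (auto intro!: eq_0_outside_words simp: words_def)
  also have "\<dots> \<le> (\<Sum>k\<in>{1..K}. P (Suc (length s)) (s @ [k]))"
    by (rule sum_mono2) (auto simp: nonneg)
  finally show ?thesis using consistent[of "length s" s] by simp
qed

lemma lo_le_lo_snoc: "lo P s \<le> lo P (s @ [x])"
  by (simp add: lo_snoc sum_nonneg nonneg)

lemma hi_snoc_le_hi: "hi P (s @ [x]) \<le> hi P s"
  using sum_children_le[where x = x and s = s] interval_length[of s] by (simp add: hi_snoc)

lemma lo_le_hi: "lo P s \<le> hi P s"
  using interval_length[of s] nonneg[of "length s" s] by simp

lemma lo_nonneg: "0 \<le> lo P s"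
  by (induction s rule: rev_induct) (auto intro: order_trans lo_le_lo_snoc)

lemma hi_le_1: "hi P s \<le> 1"
  by (induction s rule: rev_induct) (auto intro: order_trans hi_snoc_le_hi)

lemma interval_subset_unit: "interval P s \<subseteq> {0..<1}"
  using lo_nonneg[of s] hi_le_1[of s] by (auto simp: interval_eq_Ico)

lemma interval_append_subset: "interval P (s @ t) \<subseteq> interval P s"
proof (induction t rule: rev_induct)
  case (snoc x t)
  have "interval P (s @ t @ [x]) \<subseteq> interval P (s @ t)"
    using lo_le_lo_snoc[of "s @ t" x] hi_snoc_le_hi[of "s @ t" x] by (auto simp: interval_eq_Ico)
  with snoc show ?case by (metis append_assoc order_trans)
qed simp

lemma interval_subset_take: "interval P xs \<subseteq> interval P (take k xs)"
  using interval_append_subset[of "take k xs" "drop k xs"] by simp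

lemma hi_snoc_le_lo_snoc:
  assumes "x < x'"
  shows "hi P (s @ [x]) \<le> lo P (s @ [x'])"
proof -
  have "(\<Sum>k\<in>{1..x}. P (Suc (length s)) (s @ [k])) \<le> (\<Sum>k\<in>{1..<x'}. P (Suc (length s)) (s @ [k]))"
    by (rule sum_mono2) (use assms in \<open>auto simp: nonneg\<close>)
  then show ?thesis by (simp add: lo_snoc hi_snoc)
qed

lemma interval_disjoint:
  "length s = length s' \<Longrightarrow> s \<noteq> s' \<Longrightarrow> interval P s \<inter> interval P s' = {}"
proof (induction s arbitrary: s' rule: rev_induct)
  case (snoc x u)
  then obtain u' x' where s': "s' = u' @ [x']"
    by (cases s' rule: rev_exhaust) auto
  show ?case
  proof (cases "u = u'")
    case True
    with snoc.prems s' have "x < x' \<or> x' < x" by (auto simp: nat_neq_iff)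
    then show ?thesis
      using hi_snoc_le_lo_snoc[of x x' u] hi_snoc_le_lo_snoc[of x' x u]
      by (auto simp: s' True interval_eq_Ico)
  next
    case False
    with snoc s' have "interval P u \<inter> interval P u' = {}" by simp
    then show ?thesis
      using interval_append_subset[of u "[x]"] interval_append_subset[of u' "[x']"] s' by blast
  qed
qed simp

lemma interval_disjoint_words:
  "xs \<in> words K m \<Longrightarrow> ys \<in> words K m \<Longrightarrow> xs \<noteq> ys \<Longrightarrow> interval P xs \<inter> interval P ys = {}"
  by (simp add: interval_disjoint length_words)

lemma lo_mem_interval: "xs \<in> words K m \<Longrightarrow> 0 < P m xs \<Longrightarrow> lo P xs \<in> interval P xs"
  using interval_length[of xs] by (simp add: interval_eq_Ico length_words)

lemma sum_words_inside_le_measure: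
  assumes "T \<in> fmeasurable lborel"
  shows "(\<Sum>xs\<in>{xs\<in>words K m. interval P xs \<subseteq> T}. P m xs) \<le> measure lborel T"
proof -
  have "(\<Sum>xs\<in>{xs\<in>words K m. interval P xs \<subseteq> T}. P m xs) =
      (\<Sum>xs\<in>{xs\<in>words K m. interval P xs \<subseteq> T}. hi P xs - lo P xs)"
    by (intro sum.cong) (auto simp: interval_length length_words)
  also have "\<dots> \<le> measure lborel T"
  proof (rule sum_disjoint_Ico_le_measure)
    fix xs ys assume "xs \<in> {xs\<in>words K m. interval P xs \<subseteq> T}" "ys \<in> {xs\<in>words K m. interval P xs \<subseteq> T}"
      "xs \<noteq> ys"
    then have "interval P xs \<inter> interval P ys = {}"
      using interval_disjoint_words by blast
    then show "{lo P xs..<hi P xs} \<inter> {lo P ys..<hi P ys} = {}"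
      by (simp add: interval_eq_Ico)
  qed (use assms finite_words in \<open>auto simp: lo_le_hi interval_eq_Ico\<close>)
  finally show ?thesis .
qed

lemma sum_small_words_containing_le:
  assumes "0 \<le> d"
  shows "(\<Sum>xs\<in>{xs\<in>words K m. t \<in> interval P xs \<and> P m xs \<le> d}. P m xs) \<le> d"
proof -
  let ?W = "{xs\<in>words K m. t \<in> interval P xs \<and> P m xs \<le> d}"
  have "finite ?W"
    by (simp add: finite_words)
  moreover have "xs = ys" if "xs \<in> ?W" "ys \<in> ?W" for xs ys
    using that interval_disjoint_words[of xs m ys] by blast
  ultimately have "card ?W \<le> 1"
    by (simp add: card_le_Suc0_iff_eq)
  then have "real (card ?W) * d \<le> d"
    using assms by (simp add: mult_left_le_one_le)
  moreover have "(\<Sum>xs\<in>?W. P m xs) \<le> real (card ?W) * d"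
    by (rule sum_bounded_above) simp
  ultimately show ?thesis by linarith
qed

text \<open>Each such interval contains \<open>a\<close> or \<open>b\<close>, and a point lies in at most one interval.\<close>

lemma sum_words_straddling_le:
  "(\<Sum>xs\<in>{xs\<in>words K m. \<not> interval P xs \<subseteq> {a..<b} \<and> \<not> interval P xs \<subseteq> {0..<1} - {a..<b}}. P m xs)
     \<le> prob_Sc K P m lam + 2 * 2 powr - lam"
proof -
  define C where "C = {xs\<in>words K m. \<not> interval P xs \<subseteq> {a..<b} \<and> \<not> interval P xs \<subseteq> {0..<1} - {a..<b}}"
  define S where "S = {xs\<in>words K m. 0 < P m xs \<and> log 2 (1 / P m xs) < lam}"
  define \<delta> where "\<delta> = 2 powr - lam"
  define Ca where "Ca = {xs\<in>words K m. a \<in> interval P xs \<and> P m xs \<le> \<delta>}"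
  define Cb where "Cb = {xs\<in>words K m. b \<in> interval P xs \<and> P m xs \<le> \<delta>}"
  have fin: "finite C" "finite (Ca \<union> Cb)"
    by (simp_all add: C_def Ca_def Cb_def finite_words)
  have "C - S \<subseteq> Ca \<union> Cb"
  proof
    fix xs assume xs: "xs \<in> C - S"
    have "P m xs \<le> \<delta>"
      using xs nonneg[of m xs] prob_le_powr_if_log_ge[of "P m xs" lam]
      by (cases "0 < P m xs") (auto simp: S_def C_def \<delta>_def)
    moreover have "a \<in> interval P xs \<or> b \<in> interval P xs"
      using xs interval_subset_unit[of xs] by (auto simp: C_def interval_eq_Ico subset_iff)
    ultimately show "xs \<in> Ca \<union> Cb"
      using xs by (auto simp: C_def Ca_def Cb_def)
  qed
  then have "sum (P m) (C - S) \<le> sum (P m) (Ca \<union> Cb)"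
    using fin by (intro sum_mono2) (auto simp: nonneg)
  also have "\<dots> \<le> sum (P m) Ca + sum (P m) Cb"
    using fin sum_Un[of Ca Cb "P m"] sum_nonneg[of "Ca \<inter> Cb" "P m"] by (auto simp: nonneg)
  also have "\<dots> \<le> 2 * \<delta>"
    using sum_small_words_containing_le[of \<delta> m a] sum_small_words_containing_le[of \<delta> m b]
    by (simp add: Ca_def Cb_def \<delta>_def)
  finally have "sum (P m) (C - S) \<le> 2 * \<delta>" .
  moreover have "sum (P m) (C \<inter> S) \<le> prob_Sc K P m lam"
    by (auto simp: prob_Sc_def S_def C_def nonneg finite_words intro!: sum_mono2)
  ultimately show ?thesis
    using fin sum.Int_Diff[of C "P m" S] by (simp add: C_def \<delta>_def)
qed

lemma sum_words_inside_Ico_ge: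
  assumes "0 \<le> a" "a \<le> b" "b \<le> 1"
  shows "b - a - prob_Sc K P m lam - 2 * 2 powr - lam
           \<le> (\<Sum>xs\<in>{xs\<in>words K m. interval P xs \<subseteq> {a..<b}}. P m xs)"
proof -
  define W where "W = words K m"
  define U where "U = {0..<1} - {a..<b::real}"
  define A where "A = {xs\<in>W. interval P xs \<subseteq> {a..<b}}"
  define B where "B = {xs\<in>W - A. interval P xs \<subseteq> U}"
  have fin: "finite W" by (simp add: W_def finite_words)
  have "1 = sum (P m) (W - A) + sum (P m) A"
    using sum_words_eq_1[of m] fin sum.subset_diff[of A W "P m"] by (simp add: W_def A_def)
  also have "sum (P m) (W - A) = sum (P m) (W - A - B) + sum (P m) B"
    using fin by (intro sum.subset_diff) (auto simp: B_def)
  finally have "1 = sum (P m) (W - A - B) + sum (P m) B + sum (P m) A" .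
  moreover have "sum (P m) B \<le> 1 - (b - a)"
  proof -
    have "U \<in> fmeasurable lborel" by (auto simp: U_def Ico_fmeasurable)
    then have "sum (P m) {xs\<in>W. interval P xs \<subseteq> U} \<le> measure lborel U"
      unfolding W_def by (rule sum_words_inside_le_measure)
    moreover have "measure lborel U = 1 - (b - a)"
      unfolding U_def using assms by (subst measurable_measure_Diff) (auto simp: Ico_fmeasurable)
    moreover have "sum (P m) B \<le> sum (P m) {xs\<in>W. interval P xs \<subseteq> U}"
      using fin by (intro sum_mono2) (auto simp: B_def nonneg)
    ultimately show ?thesis by linarith
  qed
  moreover have "W - A - B =
      {xs\<in>words K m. \<not> interval P xs \<subseteq> {a..<b} \<and> \<not> interval P xs \<subseteq> {0..<1} - {a..<b}}"
    by (auto simp: W_def A_def B_def U_def)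
  ultimately show ?thesis
    using sum_words_straddling_le[of m a b lam] by (simp add: A_def W_def)
qed

end

lemma phi_int_SomeD:
  assumes "phi_int P N Q n xs = Some y"
  shows "y \<in> words N n \<and> interval P (take (LEAST k. stops_at P N Q n (take k xs)) xs) \<subseteq> interval Q y"
proof -
  let ?k = "LEAST k. stops_at P N Q n (take k xs)"
  have "\<exists>k\<le>length xs. stops_at P N Q n (take k xs)"
    using assms by (auto simp: phi_int_def split: if_splits)
  then have stop: "stops_at P N Q n (take ?k xs)" and
    y: "y = (SOME y. y \<in> words N n \<and> interval P (take ?k xs) \<subseteq> interval Q y)"
    using assms by (auto intro: LeastI simp: phi_int_def Let_def)
  from stop have "\<exists>y. y \<in> words N n \<and> interval P (take ?k xs) \<subseteq> interval Q y"
    by (auto simp: stops_at_def)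
  then show ?thesis unfolding y by (rule someI_ex)
qed

lemma phi_int_eq_Some_iff:
  assumes "process M P" "process N Q" "y \<in> words N n" "xs \<in> words M m" "0 < P m xs"
  shows "phi_int P N Q n xs = Some y \<longleftrightarrow> interval P xs \<subseteq> interval Q y"
proof
  assume "phi_int P N Q n xs = Some y"
  then show "interval P xs \<subseteq> interval Q y"
    using phi_int_SomeD process.interval_subset_take[OF assms(1)] by blast
next
  assume sub: "interval P xs \<subseteq> interval Q y"
  then have "stops_at P N Q n (take (length xs) xs)"
    using assms(3) by (auto simp: stops_at_def)
  then obtain y' where y': "phi_int P N Q n xs = Some y'"
    unfolding phi_int_def by (metis order_refl)
  then have "y' \<in> words N n" "interval P xs \<subseteq> interval Q y'"
    using phi_int_SomeD process.interval_subset_take[OF assms(1)] by blast+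
  moreover have "lo P xs \<in> interval P xs"
    using process.lo_mem_interval[OF assms(1,4,5)] .
  ultimately have "y' = y"
    using sub process.interval_disjoint_words[OF assms(2,3)] by blast
  with y' show "phi_int P N Q n xs = Some y" by simp
qed

text \<open>Null words may be mapped anywhere, but they do not count.\<close>

lemma prob_output_eq_sum_inside:
  assumes "process M P" "process N Q" "y \<in> words N n"
  shows "prob_output M P N Q n m y = (\<Sum>xs\<in>{xs\<in>words M m. interval P xs \<subseteq> interval Q y}. P m xs)"
proof -
  have "(if phi_int P N Q n xs = Some y then P m xs else 0) =
      (if interval P xs \<subseteq> interval Q y then P m xs else 0)" if "xs \<in> words M m" for xs
    using phi_int_eq_Some_iff[OF assms that] process.nonneg[OF assms(1), of m xs]
    by (cases "P m xs = 0") auto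
  then show ?thesis
    by (simp add: prob_output_def sum.inter_filter finite_words cong: sum.cong)
qed

lemma tendsto_if_powr_lower_bounds:
  fixes f :: "nat \<Rightarrow> real" and g :: "real \<Rightarrow> nat \<Rightarrow> real"
  assumes upper: "\<And>m. f m \<le> q"
    and lower: "\<And>lam m. 0 < lam \<Longrightarrow> q - g lam m - 2 * 2 powr - lam \<le> f m"
    and g: "\<And>lam. 0 < lam \<Longrightarrow> g lam \<longlonglongrightarrow> 0"
  shows "f \<longlonglongrightarrow> q"
proof (rule LIMSEQ_I)
  fix r :: real assume r: "0 < r"
  define lam where "lam = max 1 (log 2 (8 / r))"
  have lam: "0 < lam" by (simp add: lam_def)
  have "2 powr - lam \<le> 2 powr - log 2 (8 / r)"
    by (intro powr_mono) (auto simp: lam_def)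
  also have "\<dots> = r / 8"
    using r by (simp add: powr_minus_divide)
  finally have \<delta>: "2 * 2 powr - lam < r / 2" using r by simp
  obtain m0 where "\<forall>m\<ge>m0. norm (g lam m - 0) < r / 2"
    using LIMSEQ_D[OF g[OF lam], of "r / 2"] r by auto
  then have "norm (f m - q) < r" if "m \<ge> m0" for m
    using that upper[of m] lower[OF lam, of m] \<delta> by (auto simp: abs_less_iff)
  then show "\<exists>m0. \<forall>m\<ge>m0. norm (f m - q) < r" by blast
qed

theorem corollary1:
  fixes M N :: nat and P Q :: "nat \<Rightarrow> nat list \<Rightarrow> real"
  assumes "is_process M P"
    and "\<And>lam::real. lam > 0 \<Longrightarrow> (\<lambda>m. prob_Sc M P m lam) \<longlonglongrightarrow> 0"
  shows "\<forall>n. is_process N Q \<longrightarrow>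
           (\<forall>y\<in>words N n. (\<lambda>m. prob_output M P N Q n m y) \<longlonglongrightarrow> Q n y)"
proof (intro allI impI ballI)
  fix n y assume "is_process N Q" and y: "y \<in> words N n"
  interpret X: process M P by unfold_locales (fact assms(1))
  interpret Y: process N Q by unfold_locales fact
  have J: "interval Q y = {lo Q y..<hi Q y}" and length_J: "hi Q y - lo Q y = Q n y"
    using Y.interval_length[of y] y by (simp_all add: interval_eq_Ico length_words)
  have prob_output: "prob_output M P N Q n m y =
      (\<Sum>xs\<in>{xs\<in>words M m. interval P xs \<subseteq> {lo Q y..<hi Q y}}. P m xs)" for m
    using prob_output_eq_sum_inside[OF X.process_axioms Y.process_axioms y] by (simp add: J)
  show "(\<lambda>m. prob_output M P N Q n m y) \<longlonglongrightarrow> Q n y"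
  proof (rule tendsto_if_powr_lower_bounds)
    show "prob_output M P N Q n m y \<le> Q n y" for m
      using X.sum_words_inside_le_measure[OF Ico_fmeasurable[of "lo Q y" "hi Q y"], of m]
        Y.lo_le_hi[of y] length_J by (simp add: prob_output)
    show "Q n y - prob_Sc M P m lam - 2 * 2 powr - lam \<le> prob_output M P N Q n m y" for lam m
      using X.sum_words_inside_Ico_ge[OF Y.lo_nonneg[of y] Y.lo_le_hi[of y] Y.hi_le_1[of y], of m lam]
      by (simp add: prob_output length_J)
  qed (fact assms(2))
qed

end
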